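(* Let $d>1$ be an integer. There is a constant $K>0$ such that for all $\epsilon\in(0,1)$ and $r>1$: if $p$ is a monic polynomial of degree $d$ and $\alpha\in\mathbb{C}$ is such that all roots $z_1,\dots,z_d$ of $p(z)=\alpha$ lie in $\mathbb{D}_r(0)$ and $\operatorname{dist}(\{z_1,\dots,z_d\},\operatorname{Crit}(p))>\epsilon$, then $|z_i-z_j|>K(\epsilon/r)^{d^2}$ for all $1\le i<j\le d$.
   Context: $\operatorname{Crit}(p)$ is the set of critical points of $p$; $\operatorname{dist}$ is the Euclidean distance between sets. *)

theory Defs
  imports "HOL-Analysis.Analysis" "HOL-Computational_Algebra.Polynomial"
begin

definition Crit :: "complex poly \<Rightarrow> complex set" where
  "Crit p = {z. poly (pderiv p) z = 0}"

end

theory Submission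
  imports Defs "HOL-Computational_Algebra.Fundamental_Theorem_Algebra"
begin

text \<open>Evaluate \<open>p'\<close> at a root \<open>z\<close> of \<open>p - \<alpha>\<close> in two ways. Factoring \<open>p'\<close> over its
  \<open>d - 1\<close> roots, the critical points, each farther than \<open>\<epsilon>\<close> from \<open>z\<close>, gives
  \<open>|p'(z)| \<ge> d \<epsilon>^(d - 1)\<close>. On the other hand no root of \<open>p - \<alpha>\<close> is critical, so
  \<open>p - \<alpha>\<close> has \<open>d\<close> simple roots in the disc of radius \<open>r\<close> and \<open>p'(z)\<close> is the product
  of the \<open>z - x\<close> over the other roots \<open>x\<close>; this is at most \<open>|z - w| (2r)^(d - 2)\<close>.
  Comparing the two bounds gives \<open>|z - w| \<ge> d \<epsilon>^(d - 1) / (2r)^(d - 2)\<close>, which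
  exceeds \<open>2^(-d) (\<epsilon>/r)^(d^2)\<close>.\<close>

lemma norm_poly_ge_if_roots_far:
  fixes q :: "complex poly"
  assumes "0 \<le> e" and far: "\<And>c. poly q c = 0 \<Longrightarrow> e \<le> cmod (z - c)"
  shows "cmod (lead_coeff q) * e ^ degree q \<le> cmod (poly q z)"
proof (cases "q = 0")
  case False
  obtain root where root: "smult (lead_coeff q) (\<Prod>i<degree q. [:-root i, 1:]) = q"
    using complex_poly_decompose' by blast
  have poly_q: "poly q x = lead_coeff q * (\<Prod>i<degree q. x - root i)" for x
    using arg_cong[OF root, of "\<lambda>f. poly f x"] by (simp add: poly_prod)
  have "poly q (root i) = 0" if "i < degree q" for i
    unfolding poly_q using that by (auto intro: prod_zero)
  then have "e ^ degree q \<le> (\<Prod>i<degree q. cmod (z - root i))"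
    using prod_mono[of "{..<degree q}" "\<lambda>_. e"] assms by auto
  then show ?thesis
    by (simp add: poly_q norm_mult prod_norm mult_left_mono)
qed (simp add: \<open>0 \<le> e\<close>)

lemma poly_pderiv_at_root_rsquarefree:
  fixes q :: "complex poly"
  assumes "rsquarefree q" and "poly q z = 0"
  shows "poly (pderiv q) z = lead_coeff q * (\<Prod>x\<in>{x. poly q x = 0} - {z}. z - x)"
proof -
  define S where "S = {x. poly q x = 0}"
  define g where "g = (\<Prod>x\<in>S - {z}. [:-x, 1:])"
  have "finite S"
    using assms(1) poly_roots_finite by (auto simp: S_def rsquarefree_def)
  moreover have "z \<in> S" using assms(2) by (simp add: S_def)
  ultimately have "q = smult (lead_coeff q) ([:-z, 1:] * g)"
    using complex_poly_decompose_rsquarefree[OF assms(1)]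
    by (simp add: S_def g_def prod.remove)
  then have "pderiv q = smult (lead_coeff q) (pderiv ([:-z, 1:] * g))"
    by (metis pderiv_smult)
  also have "pderiv ([:-z, 1:] * g) = [:-z, 1:] * pderiv g + g"
    by (simp only: pderiv_mult) (simp add: pderiv_pCons)
  finally show ?thesis by (simp add: g_def S_def poly_prod)
qed

lemma card_roots_rsquarefree:
  fixes q :: "complex poly"
  assumes "rsquarefree q"
  shows "card {x. poly q x = 0} = degree q"
proof -
  have "q \<noteq> 0" using assms by (simp add: rsquarefree_def)
  have "degree q = degree (\<Prod>x | poly q x = 0. [:-x, 1:])"
    by (subst (1) complex_poly_decompose_rsquarefree[OF assms, symmetric])
       (simp add: \<open>q \<noteq> 0\<close>)
  also have "\<dots> = card {x. poly q x = 0}"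
    by (simp add: degree_prod_sum_eq)
  finally show ?thesis by simp
qed

lemma norm_pderiv_at_root_le:
  fixes q :: "complex poly"
  assumes sf: "rsquarefree q" and roots_bounded: "\<And>x. poly q x = 0 \<Longrightarrow> cmod x < r"
    and "poly q z = 0" and "poly q w = 0" and "z \<noteq> w"
  shows "cmod (poly (pderiv q) z) \<le> cmod (lead_coeff q) * cmod (z - w) * (2 * r) ^ (degree q - 2)"
proof -
  define T where "T = {x. poly q x = 0} - {z} - {w}"
  have fin: "finite {x. poly q x = 0}"
    using sf poly_roots_finite by (auto simp: rsquarefree_def)
  have "(\<Prod>x\<in>{x. poly q x = 0} - {z}. z - x) = (z - w) * (\<Prod>x\<in>T. z - x)"
    unfolding T_def by (rule prod.remove) (use fin assms in auto)
  then have eq: "cmod (poly (pderiv q) z) = cmod (lead_coeff q) * cmod (z - w) * (\<Prod>x\<in>T. cmod (z - x))"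
    by (simp add: poly_pderiv_at_root_rsquarefree[OF sf \<open>poly q z = 0\<close>] norm_mult prod_norm)
  have "card T = degree q - 2"
    using card_roots_rsquarefree[OF sf] fin assms by (simp add: T_def card_Diff_singleton)
  moreover have "cmod (z - x) \<le> 2 * r" if "x \<in> T" for x
  proof -
    have "cmod x < r" "cmod z < r"
      using that roots_bounded \<open>poly q z = 0\<close> by (auto simp: T_def)
    then show ?thesis using norm_triangle_ineq4[of z x] by linarith
  qed
  ultimately have "(\<Prod>x\<in>T. cmod (z - x)) \<le> (2 * r) ^ (degree q - 2)"
    using prod_mono[of T "\<lambda>x. cmod (z - x)" "\<lambda>_. 2 * r"] by simp
  then show ?thesis
    unfolding eq by (simp add: mult_left_mono)
qed

lemma degree_diff_const:
  fixes p :: "'a::ab_group_add poly"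
  shows "0 < degree p \<Longrightarrow> degree (p - [:a:]) = degree p"
  using degree_add_eq_left[of "[:-a:]" p] by (simp add: diff_conv_add_uminus)

lemma lead_coeff_diff_const:
  fixes p :: "'a::ab_group_add poly"
  shows "0 < degree p \<Longrightarrow> lead_coeff (p - [:a:]) = lead_coeff p"
  by (simp add: degree_diff_const coeff_pCons split: nat.split)

lemma dist_roots_Crit_gt:
  assumes "setdist {z. poly p z = \<alpha>} (Crit p) > e" and "poly p x = \<alpha>" and "poly (pderiv p) c = 0"
  shows "e < cmod (x - c)"
proof -
  have "setdist {z. poly p z = \<alpha>} (Crit p) \<le> dist x c"
    by (rule setdist_le_dist) (use assms in \<open>auto simp: Crit_def\<close>)
  then show ?thesis using assms(1) by (simp add: dist_norm)
qed

lemma scaled_power_gap: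
  fixes e r x :: real and d :: nat
  assumes "d > 1" "0 < e" "e < 1" "r > 1"
    and gap: "real d * e ^ (d - 1) \<le> x * (2 * r) ^ (d - 2)"
  shows "x > 1 / 2 ^ d * (e / r) ^ (d^2)"
proof -
  obtain k where d: "d = k + 2"
    using \<open>d > 1\<close> by (intro that[of "d - 2"]) simp
  have exps: "d - 1 \<le> d^2" "d - 2 \<le> d^2"
    by (simp_all add: power2_eq_square le_trans[OF diff_le_self le_square])
  have "(e / r) ^ (d^2) * r ^ (d - 2) \<le> (e / r) ^ (d^2) * r ^ (d^2)"
    using power_increasing[OF exps(2), of r] assms by (simp add: mult_left_mono)
  also have "\<dots> = e ^ (d^2)"
    using assms by (simp add: power_divide)
  also have "\<dots> \<le> e ^ (d - 1)"
    using power_decreasing[OF exps(1), of e] assms by simp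
  finally have "1 / 2 ^ d * (e / r) ^ (d^2) * (2 * r) ^ (d - 2) \<le> e ^ (d - 1) / 4"
    by (simp add: d power_mult_distrib power_add)
  also have "\<dots> < real d * e ^ (d - 1)"
    using assms by simp
  also have "\<dots> \<le> x * (2 * r) ^ (d - 2)"
    by (rule gap)
  finally show ?thesis
    by (rule mult_right_less_imp_less) (use assms in simp)
qed

theorem lemmaA3:
  fixes d :: nat
  assumes "d > 1"
  shows "\<exists>K::real. K > 0 \<and>
    (\<forall>(\<epsilon>::real) (r::real) (p::complex poly) (\<alpha>::complex).
       0 < \<epsilon> \<and> \<epsilon> < 1 \<and> r > 1 \<and> degree p = d \<and> lead_coeff p = 1 \<and>
       {z. poly p z = \<alpha>} \<subseteq> ball 0 r \<and>
       setdist {z. poly p z = \<alpha>} (Crit p) > \<epsilon> \<longrightarrow>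
       (\<forall>z w. poly p z = \<alpha> \<and> poly p w = \<alpha> \<and> z \<noteq> w \<longrightarrow>
          cmod (z - w) > K * (\<epsilon> / r) ^ (d^2)))"
proof (intro exI[of _ "1 / 2 ^ d"] conjI allI impI; (elim conjE)?)
  fix e r :: real and p :: "complex poly" and \<alpha> z w :: complex
  assume "0 < e" "e < 1" "r > 1" and deg_p: "degree p = d" and monic: "lead_coeff p = 1"
    and roots_in_ball: "{z. poly p z = \<alpha>} \<subseteq> ball 0 r"
    and dist_crit: "setdist {z. poly p z = \<alpha>} (Crit p) > e"
    and roots: "poly p z = \<alpha>" "poly p w = \<alpha>" "z \<noteq> w"
  note far = dist_roots_Crit_gt[OF dist_crit]
  define q where "q = p - [:\<alpha>:]"
  have "0 < degree p" using deg_p \<open>d > 1\<close> by simp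
  then have "degree q = degree p" "lead_coeff q = lead_coeff p"
    unfolding q_def by (rule degree_diff_const lead_coeff_diff_const)+
  have q_monic: "lead_coeff q = 1"
    using \<open>lead_coeff q = lead_coeff p\<close> monic by (rule trans)
  have q_pderiv: "pderiv q = pderiv p" and q_roots: "poly q x = 0 \<longleftrightarrow> poly p x = \<alpha>" for x
    by (simp_all add: q_def pderiv_diff)
  have "rsquarefree q"
    unfolding rsquarefree_roots q_pderiv q_roots using far \<open>0 < e\<close> by fastforce
  have "degree (pderiv p) = d - 1" "lead_coeff (pderiv p) = of_nat d"
    using deg_p monic \<open>d > 1\<close> by (auto simp: degree_pderiv coeff_pderiv)
  then have "real d * e ^ (d - 1) \<le> cmod (poly (pderiv p) z)"
    using norm_poly_ge_if_roots_far[of e "pderiv p" z] far[OF \<open>poly p z = \<alpha>\<close>] \<open>0 < e\<close>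
    by (simp add: less_imp_le)
  also have "\<dots> \<le> cmod (z - w) * (2 * r) ^ (d - 2)"
    using norm_pderiv_at_root_le[OF \<open>rsquarefree q\<close>, of r z w, unfolded q_monic] roots roots_in_ball
    by (simp add: q_pderiv q_roots \<open>degree q = degree p\<close> deg_p subset_iff)
  finally show "cmod (z - w) > 1 / 2 ^ d * (e / r) ^ (d^2)"
    using scaled_power_gap \<open>d > 1\<close> \<open>0 < e\<close> \<open>e < 1\<close> \<open>r > 1\<close> by blast
qed simp

end
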